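(* Let $\Lambda$ be a recursive $\varepsilon$-number and let the models $\mathcal{J}$ and $\mathcal{H}$ be as in the context. For every $x\in H$ and every formula $\varphi\in\mathbb{F}$: $\mathcal{J},x\Vdash\varphi$ if and only if $\mathcal{H},x\Vdash\varphi$.
   Context: Fix a recursive ordinal $\Lambda$ that is an $\varepsilon$-number ($\omega^\Lambda=\Lambda$). Formulas: $\mathbb{F}$ is the smallest set containing $\top$, closed under $\wedge$, and such that if $\varphi\in\mathbb{F}$, $n<\omega$, $\alpha<\Lambda$ then $\langle n^\alpha\rangle\varphi\in\mathbb{F}$. The ordinal logarithm: $\ell(0)=0$, $\ell(\alpha+\omega^\beta)=\beta$. An $\ell$-sequence is an $\omega$-sequence of ordinals $x=\langle x_0,x_1,\dots\rangle$ with $x_{i+1}\le\ell(x_i)$ for all $i$. $I$ is the set of $\ell$-sequences with all entries $<\Lambda$; $H\subseteq I$ is the set of $x\in I$ with $x_j=0$ for some $j$. For $n<\omega$, $x R_n y$ (on $I$) and $x S_n y$ (on $H$) both mean: $x_m>y_m$ for all $m\le n$ and $x_i\ge y_i$ for all $i>n$. $R_n^\alpha$ on $I$: $xR_n^0y$ iff $x=y$; $xR_n^{1+\alpha}y$ iff for every $\beta<1+\alpha$ there is $z\in I$ with $xR_nz$ and $zR_n^\beta y$. $S_n^\alpha$ on $H$: same with $S_n$ and $z\in H$. The model $\mathcal{J}=\langle I,\{R_n\}\rangle$ has forcing: $x\Vdash\top$ always; $x\Vdash\varphi\wedge\psi$ iff $x\Vdash\varphi$ and $x\Vdash\psi$;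 $x\Vdash\langle n^\alpha\rangle\varphi$ iff there is $y\in I$ with $xR_n^\alpha y$ and $y\Vdash\varphi$. The model $\mathcal{H}=\langle H,\{S_n\}\rangle$ has the same clauses with $y\in H$ and $S_n^\alpha$ in place of $R_n^\alpha$. *)

theory Defs
  imports Main "HOL-Library.Countable"
begin

text \<open>Ordinals below the fixed ordinal Lambda are represented by the elements of a
  well-ordered type 'o whose order type is Lambda.  An element a represents the ordinal
  given by the initial segment below a.\<close>

definition ozero :: "'o::wellorder" where
  "ozero = (LEAST a. True)"

definition ord_of :: "'o::wellorder \<Rightarrow> 'o rel" where
  "ord_of a = {(x, y). x \<le> y \<and> y < a}"

definition osum_rel :: "'a rel \<Rightarrow> 'b rel \<Rightarrow> ('a + 'b) rel" where
  "osum_rel r s = map_prod Inl Inl ` r \<union> map_prod Inr Inr ` s \<union>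
     {(Inl a, Inr b) | a b. a \<in> Field r \<and> b \<in> Field s}"

text \<open>omega to the power of the ordinal (order type of) A, for A a subset of 'o:
  finitely supported functions A -> nat, ordered by comparing the values at the
  largest argument where they differ (standard construction of ordinal exponentiation).\<close>
definition opow_carrier :: "'o::wellorder set \<Rightarrow> ('o \<Rightarrow> nat) set" where
  "opow_carrier A = {f. (\<forall>x. x \<notin> A \<longrightarrow> f x = 0) \<and> finite {x. f x \<noteq> 0}}"

definition omega_pow_on :: "'o::wellorder set \<Rightarrow> ('o \<Rightarrow> nat) rel" where
  "omega_pow_on A = {(f, g). f \<in> opow_carrier A \<and> g \<in> opow_carrier A \<and>
      (f = g \<or> f (Max {x. f x \<noteq> g x}) < g (Max {x. f x \<noteq> g x}))}"

definition omega_pow :: "'o::wellorder \<Rightarrow> ('o \<Rightarrow> nat) rel" where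
  "omega_pow b = omega_pow_on {x. x < b}"

definition eps_number_type :: "'o::wellorder itself \<Rightarrow> bool" where
  "eps_number_type T \<longleftrightarrow> (omega_pow_on (UNIV :: 'o set), {(x :: 'o, y). x \<le> y}) \<in> ordIso"

text \<open>Ordinal logarithm: l(0) = 0, l(alpha + omega^beta) = beta.\<close>
definition is_olog :: "'o::wellorder \<Rightarrow> 'o \<Rightarrow> bool" where
  "is_olog a b \<longleftrightarrow> (a = ozero \<and> b = ozero) \<or>
     (\<exists>c::'o. (ord_of a, osum_rel (ord_of c) (omega_pow b)) \<in> ordIso)"

definition olog :: "'o::wellorder \<Rightarrow> 'o" where
  "olog a = (THE b. is_olog a b)"

definition I_seqs :: "(nat \<Rightarrow> 'o::wellorder) set" where
  "I_seqs = {x. \<forall>i. x (Suc i) \<le> olog (x i)}"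

definition H_seqs :: "(nat \<Rightarrow> 'o::wellorder) set" where
  "H_seqs = {x \<in> I_seqs. \<exists>j. x j = ozero}"

definition Rn :: "nat \<Rightarrow> (nat \<Rightarrow> 'o::wellorder) \<Rightarrow> (nat \<Rightarrow> 'o) \<Rightarrow> bool" where
  "Rn n x y \<longleftrightarrow> (\<forall>m\<le>n. y m < x m) \<and> (\<forall>i>n. y i \<le> x i)"

inductive Rpow :: "(nat \<Rightarrow> 'o::wellorder) set \<Rightarrow> ((nat \<Rightarrow> 'o) \<Rightarrow> (nat \<Rightarrow> 'o) \<Rightarrow> bool)
    \<Rightarrow> 'o \<Rightarrow> (nat \<Rightarrow> 'o) \<Rightarrow> (nat \<Rightarrow> 'o) \<Rightarrow> bool"
  for P R where
  Rpow_zero: "a = ozero \<Longrightarrow> Rpow P R a x x"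
| Rpow_pos: "a \<noteq> ozero \<Longrightarrow> (\<forall>b<a. \<exists>z\<in>P. R x z \<and> Rpow P R b z y) \<Longrightarrow> Rpow P R a x y"

datatype 'o fm = Top | Conj "'o fm" "'o fm" | Dia nat 'o "'o fm"

fun forces :: "(nat \<Rightarrow> 'o::wellorder) set \<Rightarrow> (nat \<Rightarrow> (nat \<Rightarrow> 'o) \<Rightarrow> (nat \<Rightarrow> 'o) \<Rightarrow> bool)
    \<Rightarrow> (nat \<Rightarrow> 'o) \<Rightarrow> 'o fm \<Rightarrow> bool" where
  "forces P R x Top = True"
| "forces P R x (Conj \<phi> \<psi>) = (forces P R x \<phi> \<and> forces P R x \<psi>)"
| "forces P R x (Dia n a \<phi>) = (\<exists>y\<in>P. Rpow P (R n) a x y \<and> forces P R y \<phi>)"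

end

theory Submission
  imports Defs
begin

text \<open>Proof idea: a step of R_n never increases an entry, so a successor of a sequence
  with a zero entry again has that zero entry.  Hence H is closed under R_n-successors in I,
  every R_n-witness demanded from a point of H already lies in H, and the two forcing relations
  agree on H by induction on the formula.\<close>

lemma ozero_le: "(ozero::'o::wellorder) \<le> a"
  unfolding ozero_def by (rule Least_le) simp

lemma Rn_keeps_ozero:
  assumes "Rn n x z" "x j = ozero"
  shows "z j = ozero"
proof -
  have "z j \<le> x j" using assms(1) unfolding Rn_def
    by (cases "j \<le> n") (auto intro: less_imp_le)
  then show ?thesis using assms(2) ozero_le[of "z j"] by simp
qed

lemma H_seqs_subset_I_seqs: "H_seqs \<subseteq> I_seqs"
  unfolding H_seqs_def by blast

lemma Rn_successor_in_H_seqs: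
  assumes "x \<in> H_seqs" "z \<in> I_seqs" "Rn n x z"
  shows "z \<in> H_seqs"
  using assms Rn_keeps_ozero unfolding H_seqs_def by blast

lemma Rpow_mono:
  "Rpow P R a x y \<Longrightarrow> P \<subseteq> Q \<Longrightarrow> Rpow Q R a x y"
proof (induction rule: Rpow.induct)
  case (Rpow_zero a x)
  then show ?case by (simp add: Rpow.Rpow_zero)
next
  case (Rpow_pos a x y)
  then show ?case by (intro Rpow.Rpow_pos) blast+
qed

lemma Rpow_restrict_closed:
  assumes closed: "\<And>x z. x \<in> P \<Longrightarrow> z \<in> Q \<Longrightarrow> R x z \<Longrightarrow> z \<in> P"
  shows "Rpow Q R a x y \<Longrightarrow> x \<in> P \<Longrightarrow> y \<in> P \<and> Rpow P R a x y"
proof (induction rule: Rpow.induct)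
  case (Rpow_zero a x)
  then show ?case by (simp add: Rpow.Rpow_zero)
next
  case (Rpow_pos a x y)
  have step: "\<exists>z\<in>P. R x z \<and> (y \<in> P \<and> Rpow P R b z y)" if "b < a" for b
  proof -
    obtain z where "z \<in> Q" "R x z" and IH: "z \<in> P \<Longrightarrow> y \<in> P \<and> Rpow P R b z y"
      using Rpow_pos.IH \<open>b < a\<close> by blast
    moreover have "z \<in> P" using closed Rpow_pos.prems calculation by blast
    ultimately show ?thesis by blast
  qed
  have "ozero < a" using Rpow_pos.hyps(1) ozero_le[of a] by (simp add: order.order_iff_strict)
  with step have "y \<in> P" by blast
  moreover have "Rpow P R a x y" using Rpow_pos.hyps(1) step by (blast intro: Rpow.Rpow_pos)
  ultimately show ?case by blast
qed

lemma forces_restrict_closed: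
  assumes "P \<subseteq> Q"
    and closed: "\<And>n x z. x \<in> P \<Longrightarrow> z \<in> Q \<Longrightarrow> R n x z \<Longrightarrow> z \<in> P"
    and "x \<in> P"
  shows "forces Q R x \<phi> \<longleftrightarrow> forces P R x \<phi>"
  using \<open>x \<in> P\<close>
proof (induction \<phi> arbitrary: x)
  case (Dia n a \<phi>)
  show ?case
  proof
    assume "forces Q R x (Dia n a \<phi>)"
    then obtain y where "Rpow Q (R n) a x y" "forces Q R y \<phi>"
      by auto
    moreover have "y \<in> P \<and> Rpow P (R n) a x y"
      using Rpow_restrict_closed[of P Q "R n"] closed calculation(1) Dia.prems by metis
    ultimately show "forces P R x (Dia n a \<phi>)"
      using Dia.IH by auto
  next
    assume "forces P R x (Dia n a \<phi>)"
    then obtain y where "y \<in> P" "Rpow P (R n) a x y" "forces P R y \<phi>"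
      by auto
    moreover have "Rpow Q (R n) a x y"
      using calculation(2) \<open>P \<subseteq> Q\<close> by (rule Rpow_mono)
    ultimately show "forces Q R x (Dia n a \<phi>)"
      using Dia.IH \<open>P \<subseteq> Q\<close> by auto
  qed
qed simp_all

theorem theorem5p1:
  fixes x :: "nat \<Rightarrow> 'o::{wellorder, countable}" and \<phi> :: "'o fm"
  assumes "eps_number_type TYPE('o)"
    and "x \<in> H_seqs"
  shows "forces I_seqs Rn x \<phi> \<longleftrightarrow> forces H_seqs Rn x \<phi>"
  using forces_restrict_closed[OF H_seqs_subset_I_seqs Rn_successor_in_H_seqs assms(2)] .

end
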